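(* Let $V$ be a countable dimensional vector space with a fixed basis $E$. On the set of generalized flags in $V$ that are weakly compatible with $E$, the relation of $E$-commensurability is an equivalence relation. Moreover, in the definition of $E$-commensurability, condition (ii) may equivalently be replaced by (ii$'$): $\dim(F/(F\cap\varphi(F)))=\dim(\varphi(F)/(F\cap\varphi(F)))$ for every $F\in\mathcal{F}$.
   Context: $k$ is a field of characteristic $0$. A chain of subspaces is a set of pairwise distinct subspaces totally ordered by inclusion; $\mathcal{C}'$ (resp. $\mathcal{C}''$) denotes elements with an immediate successor (resp. predecessor), $F^+$ the immediate successor of $F\in\mathcal{C}'$. A generalized flag is a chain $\mathcal{F}$ with $\mathcal{F}=\mathcal{F}'\cup\mathcal{F}''$ and $V\setminus\{0\}=\bigcup_{F\in\mathcal{F}'}(F^+\setminus F)$; for $v\ne0$, $F'_v$ is the unique $F\in\mathcal{F}'$ with $v\in F^+\setminus F$. For a chain $\mathcal{C}$, $[v]_\mathcal{C}:=\{u:\forall C\in\mathcal{C},\ u\in C\iff v\in C\}$ and $fl(\mathcal{C})$ is the unique generalized flag inducing the same partition. A basis $\{e_\alpha\}_{\alpha\in A}$ is compatible with $\mathcal{F}$ if there is a strict partial order $\prec$ on $A$ (incomparability being an equivalence relation) with $F'_{e_\alpha}=\mathrm{span}\{e_\beta:\beta\prec\alpha\}$ and $\mathcal{F}=fl(\{F'_{e_\alpha}\})$. A generalized flag $\mathcal{F}$ is weakly compatible with $E$ if it is compatible with some basis $L$ of $V$ such that $E\setminus(E\cap L)$ is finite. Two generalized flags $\mathcal{F},\mathcal{G}$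 are $E$-commensurable if both are weakly compatible with $E$ and there exist an inclusion-preserving bijection $\varphi:\mathcal{F}\to\mathcal{G}$ and a finite dimensional subspace $U\subset V$ such that for every $F\in\mathcal{F}$: (i) $F\subset\varphi(F)+U$ and $\varphi(F)\subset F+U$; (ii) $\dim(F\cap U)=\dim(\varphi(F)\cap U)$. *)

theory Defs
  imports "HOL-Library.Extended_Nat"
begin

text \<open>The vector space V is the whole carrier type 'v, with scalar multiplication
  scale over a field 'k (characteristic 0 is imposed in the theorem via field_char_0).\<close>

context
  fixes scale :: "'k::field \<Rightarrow> 'v::ab_group_add \<Rightarrow> 'v"
begin

abbreviation "Span \<equiv> module.span scale"
abbreviation "Subsp \<equiv> module.subspace scale"
abbreviation "Indep \<equiv> \<lambda>S. \<not> module.dependent scale S"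
abbreviation "Dim \<equiv> vector_space.dim scale"

definition is_basis :: "'v set \<Rightarrow> bool" where
  "is_basis L \<longleftrightarrow> Indep L \<and> Span L = UNIV"

definition fin_dim :: "'v set \<Rightarrow> bool" where
  "fin_dim U \<longleftrightarrow> (\<exists>S. finite S \<and> U = Span S)"

text \<open>A chain of subspaces (pairwise distinct automatically, being a set).\<close>
definition is_chain :: "'v set set \<Rightarrow> bool" where
  "is_chain C \<longleftrightarrow> (\<forall>A\<in>C. Subsp A) \<and> (\<forall>A\<in>C. \<forall>B\<in>C. A \<subseteq> B \<or> B \<subseteq> A)"

definition imm_succ :: "'v set set \<Rightarrow> 'v set \<Rightarrow> 'v set \<Rightarrow> bool" where
  "imm_succ C F G \<longleftrightarrow> F \<in> C \<and> G \<in> C \<and> F \<subset> G \<and> \<not> (\<exists>H\<in>C. F \<subset> H \<and> H \<subset> G)"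

definition has_succ :: "'v set set \<Rightarrow> 'v set set" where
  "has_succ C = {F. \<exists>G. imm_succ C F G}"

definition has_pred :: "'v set set \<Rightarrow> 'v set set" where
  "has_pred C = {G. \<exists>F. imm_succ C F G}"

definition succ :: "'v set set \<Rightarrow> 'v set \<Rightarrow> 'v set" where
  "succ C F = (THE G. imm_succ C F G)"

definition gen_flag :: "'v set set \<Rightarrow> bool" where
  "gen_flag \<F> \<longleftrightarrow> is_chain \<F> \<and> \<F> = has_succ \<F> \<union> has_pred \<F> \<and>
     UNIV - {0} = (\<Union>F\<in>has_succ \<F>. succ \<F> F - F)"

definition Fprime :: "'v set set \<Rightarrow> 'v \<Rightarrow> 'v set" where
  "Fprime \<F> v = (THE F. F \<in> has_succ \<F> \<and> v \<in> succ \<F> F - F)"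

definition cls :: "'v set set \<Rightarrow> 'v \<Rightarrow> 'v set" where
  "cls C v = {u. \<forall>A\<in>C. u \<in> A \<longleftrightarrow> v \<in> A}"

definition partition_of :: "'v set set \<Rightarrow> 'v set set" where
  "partition_of C = range (cls C)"

definition fl :: "'v set set \<Rightarrow> 'v set set" where
  "fl C = (THE \<F>. gen_flag \<F> \<and> partition_of \<F> = partition_of C)"

text \<open>A basis L (indexed by itself) is compatible with the generalized flag \<F>.\<close>
definition compatible :: "'v set set \<Rightarrow> 'v set \<Rightarrow> bool" where
  "compatible \<F> L \<longleftrightarrow> gen_flag \<F> \<and> is_basis L \<and>
     (\<exists>prec :: 'v \<Rightarrow> 'v \<Rightarrow> bool.
        (\<forall>a\<in>L. \<not> prec a a) \<and>
        (\<forall>a\<in>L. \<forall>b\<in>L. \<forall>c\<in>L. prec a b \<and> prec b c \<longrightarrow> prec a c) \<and>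
        equiv L {(a, b). a \<in> L \<and> b \<in> L \<and> \<not> prec a b \<and> \<not> prec b a} \<and>
        (\<forall>a\<in>L. Fprime \<F> a = Span {b\<in>L. prec b a}) \<and>
        \<F> = fl (Fprime \<F> ` L))"

definition weakly_compatible :: "'v set set \<Rightarrow> 'v set \<Rightarrow> bool" where
  "weakly_compatible \<F> E \<longleftrightarrow> gen_flag \<F> \<and> (\<exists>L. compatible \<F> L \<and> finite (E - E \<inter> L))"

definition sumset :: "'v set \<Rightarrow> 'v set \<Rightarrow> 'v set" where
  "sumset A B = {a + b | a b. a \<in> A \<and> b \<in> B}"

text \<open>dim (A / B) for subspaces B \<subseteq> A, as an extended natural: the minimal size of a
  finite set S \<subseteq> A with A \<subseteq> span (B \<union> S), or \<infinity> if there is none.\<close>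
definition quot_dim :: "'v set \<Rightarrow> 'v set \<Rightarrow> enat" where
  "quot_dim A B = (if \<exists>S. finite S \<and> S \<subseteq> A \<and> A \<subseteq> Span (B \<union> S)
     then enat (LEAST n. \<exists>S. finite S \<and> S \<subseteq> A \<and> A \<subseteq> Span (B \<union> S) \<and> card S = n)
     else \<infinity>)"

definition commensurable :: "'v set \<Rightarrow> 'v set set \<Rightarrow> 'v set set \<Rightarrow> bool" where
  "commensurable E \<F> \<G> \<longleftrightarrow> weakly_compatible \<F> E \<and> weakly_compatible \<G> E \<and>
     (\<exists>\<phi> U. bij_betw \<phi> \<F> \<G> \<and> (\<forall>F1\<in>\<F>. \<forall>F2\<in>\<F>. F1 \<subseteq> F2 \<longrightarrow> \<phi> F1 \<subseteq> \<phi> F2) \<and>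
        Subsp U \<and> fin_dim U \<and>
        (\<forall>F\<in>\<F>. F \<subseteq> sumset (\<phi> F) U \<and> \<phi> F \<subseteq> sumset F U \<and>
                 Dim (F \<inter> U) = Dim (\<phi> F \<inter> U)))"

definition commensurable' :: "'v set \<Rightarrow> 'v set set \<Rightarrow> 'v set set \<Rightarrow> bool" where
  "commensurable' E \<F> \<G> \<longleftrightarrow> weakly_compatible \<F> E \<and> weakly_compatible \<G> E \<and>
     (\<exists>\<phi> U. bij_betw \<phi> \<F> \<G> \<and> (\<forall>F1\<in>\<F>. \<forall>F2\<in>\<F>. F1 \<subseteq> F2 \<longrightarrow> \<phi> F1 \<subseteq> \<phi> F2) \<and>
        Subsp U \<and> fin_dim U \<and>
        (\<forall>F\<in>\<F>. F \<subseteq> sumset (\<phi> F) U \<and> \<phi> F \<subseteq> sumset F U \<and>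
                 quot_dim F (F \<inter> \<phi> F) = quot_dim (\<phi> F) (F \<inter> \<phi> F)))"

end

end

(* Let U be finite dimensional with F \<subseteq> G + U and G \<subseteq> F + U, so that F + U = G + U.
   Computing dim ((G + U)/G) along G \<subseteq> F + G \<subseteq> G + U, and using
   (F + G)/G \<cong> F/(F \<inter> G) and (G + U)/G \<cong> U/(U \<inter> G), gives
     dim U - dim (G \<inter> U) = dim ((G + U)/(F + G)) + dim (F/(F \<inter> G)),
   and the same identity with F and G exchanged has the same first summand.  Hence (ii) and (ii')
   are equivalent.  As (ii') does not involve U, condition (ii) persists when U is enlarged, which
   gives transitivity with U + W; symmetry uses that the inverse of a monotone bijection between
   chains is monotone. *)

theory Submission
  imports Defs
begin

lemma sumset_commute: "sumset A B = sumset B A"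
  unfolding sumset_def using add.commute by blast

lemma sumset_mono: "B \<subseteq> B' \<Longrightarrow> sumset A B \<subseteq> sumset A B'"
  unfolding sumset_def by blast

lemma subset_sumset: "0 \<in> B \<Longrightarrow> A \<subseteq> sumset A B"
  unfolding sumset_def by force

lemma subset_sumset_trans:
  assumes "F \<subseteq> sumset G U" "G \<subseteq> sumset H W"
  shows "F \<subseteq> sumset H (sumset U W)"
proof
  fix f assume "f \<in> F"
  then obtain g u h w where "f = g + u" "u \<in> U" "g = h + w" "h \<in> H" "w \<in> W"
    using assms unfolding sumset_def by blast
  then show "f \<in> sumset H (sumset U W)"
    unfolding sumset_def by (auto simp: algebra_simps)
qed

lemma mono_on_inv_into_chain:
  fixes f :: "'a::order \<Rightarrow> 'b::order"
  assumes "bij_betw f A B" "mono_on A f" "\<forall>x\<in>A. \<forall>y\<in>A. x \<le> y \<or> y \<le> x"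
  shows "mono_on B (inv_into A f)"
proof (rule monotone_onI)
  fix u v assume "u \<in> B" "v \<in> B" "u \<le> v"
  let ?x = "inv_into A f u" and ?y = "inv_into A f v"
  have in_A: "?x \<in> A" "?y \<in> A" and f_inv: "f ?x = u" "f ?y = v"
    using \<open>u \<in> B\<close> \<open>v \<in> B\<close> assms(1)
    by (auto intro: bij_betw_apply bij_betw_inv_into bij_betw_inv_into_right)
  show "?x \<le> ?y"
  proof (cases "?x \<le> ?y")
    case False
    then have "v \<le> u"
      using assms(2,3) in_A f_inv by (metis monotone_onD)
    then show ?thesis
      using \<open>u \<le> v\<close> by simp
  qed
qed

definition complement_basis ::
    "('k::field \<Rightarrow> 'v::ab_group_add \<Rightarrow> 'v) \<Rightarrow> 'v set \<Rightarrow> 'v set \<Rightarrow> 'v set \<Rightarrow> bool" where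
  "complement_basis scale A B S \<longleftrightarrow> finite S \<and> S \<subseteq> A \<and> A \<subseteq> Span scale (B \<union> S) \<and>
     Indep scale S \<and> Span scale S \<inter> B \<subseteq> {0}"

definition commensurable_via ::
    "('k::field \<Rightarrow> 'v::ab_group_add \<Rightarrow> 'v) \<Rightarrow> 'v set \<Rightarrow> 'v set \<Rightarrow> 'v set \<Rightarrow> bool" where
  "commensurable_via scale U F G \<longleftrightarrow>
     F \<subseteq> sumset G U \<and> G \<subseteq> sumset F U \<and> Dim scale (F \<inter> U) = Dim scale (G \<inter> U)"

definition commensurable_via' ::
    "('k::field \<Rightarrow> 'v::ab_group_add \<Rightarrow> 'v) \<Rightarrow> 'v set \<Rightarrow> 'v set \<Rightarrow> 'v set \<Rightarrow> bool" where
  "commensurable_via' scale U F G \<longleftrightarrow>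
     F \<subseteq> sumset G U \<and> G \<subseteq> sumset F U \<and> quot_dim scale F (F \<inter> G) = quot_dim scale G (F \<inter> G)"

lemma commensurable_via_sym: "commensurable_via scale U F G \<Longrightarrow> commensurable_via scale U G F"
  unfolding commensurable_via_def by auto

lemma commensurable_iff_via:
  "commensurable scale E FF GG \<longleftrightarrow> weakly_compatible scale FF E \<and> weakly_compatible scale GG E \<and>
     (\<exists>\<phi> U. bij_betw \<phi> FF GG \<and> mono_on FF \<phi> \<and> Subsp scale U \<and> fin_dim scale U \<and>
        (\<forall>F\<in>FF. commensurable_via scale U F (\<phi> F)))"
  by (simp add: commensurable_def commensurable_via_def monotone_on_def)

lemma commensurable'_iff_via':
  "commensurable' scale E FF GG \<longleftrightarrow> weakly_compatible scale FF E \<and> weakly_compatible scale GG E \<and>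
     (\<exists>\<phi> U. bij_betw \<phi> FF GG \<and> mono_on FF \<phi> \<and> Subsp scale U \<and> fin_dim scale U \<and>
        (\<forall>F\<in>FF. commensurable_via' scale U F (\<phi> F)))"
  by (simp add: commensurable'_def commensurable_via'_def monotone_on_def)

context vector_space
begin

lemma span_Un_span: "span (A \<union> span B) = span (A \<union> B)"
  by (simp add: span_Un span_span)

lemma sumset_eq_span_Un: "subspace A \<Longrightarrow> subspace B \<Longrightarrow> sumset A B = span (A \<union> B)"
  by (simp add: sumset_def span_Un span_eq_iff[THEN iffD2])

lemma finite_subset_span_cover:
  assumes "finite S" "S \<subseteq> span X"
  obtains X0 where "finite X0" "X0 \<subseteq> X" "S \<subseteq> span X0"
  using assms
proof (induction S arbitrary: thesis rule: finite_induct)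
  case empty
  then show ?case by blast
next
  case (insert a S)
  obtain X0 where X0: "finite X0" "X0 \<subseteq> X" "S \<subseteq> span X0"
    using insert by blast
  obtain t r where t: "finite t" "t \<subseteq> X" "a = (\<Sum>v\<in>t. r v *s v)"
    using insert.prems(2) unfolding span_explicit by blast
  have "a \<in> span t"
    unfolding t(3) by (intro span_sum span_scale span_base)
  then show ?case
    using X0 t by (intro insert.prems(1)[of "X0 \<union> t"]) (auto intro: span_mono[THEN subsetD])
qed

lemma independent_Un_imp_span_Int:
  assumes "finite S" "independent (S \<union> C)" "S \<inter> C = {}"
  shows "span S \<inter> span C \<subseteq> {0}"
  using assms
proof (induction S rule: finite_induct)
  case empty
  then show ?case by simp
next
  case (insert a S)
  have IH: "span S \<inter> span C \<subseteq> {0}"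
    using insert independent_mono[OF insert.prems(1)] by auto
  show ?case
  proof
    fix x assume x: "x \<in> span (insert a S) \<inter> span C"
    then obtain k where k: "x - k *s a \<in> span S"
      using span_breakdown_eq by blast
    show "x \<in> {0}"
    proof (cases "k = 0")
      case True
      then show ?thesis using k x IH by auto
    next
      case False
      have "x \<in> span (C \<union> S)" "x - k *s a \<in> span (C \<union> S)"
        using x k span_mono[of C "C \<union> S"] span_mono[of S "C \<union> S"] by auto
      then have "k *s a \<in> span (C \<union> S)"
        using span_diff by fastforce
      then have "a \<in> span (insert a S \<union> C - {a})"
        using False span_scale[of "k *s a" _ "inverse k"] insert.hyps(2) insert.prems(2)
        by (auto simp: Un_commute insert_Diff_if)
      then show ?thesis
        using insert.prems(1) unfolding dependent_def by blast
    qed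
  qed
qed

lemma independent_UnI:
  assumes "finite S" "independent S" "independent C" "span S \<inter> span C \<subseteq> {0}"
  shows "independent (S \<union> C)"
  using assms
proof (induction S rule: finite_induct)
  case empty
  then show ?case by simp
next
  case (insert a S)
  have IH: "independent (S \<union> C)"
    using insert independent_mono[OF insert.prems(1)] span_mono[of S "insert a S"] by auto
  have "a \<notin> span (S \<union> C)"
  proof
    assume "a \<in> span (S \<union> C)"
    then obtain y c where yc: "a = y + c" "y \<in> span S" "c \<in> span C"
      unfolding span_Un by blast
    have "c = a - y"
      using yc(1) by simp
    also have "\<dots> \<in> span (insert a S)"
      using yc(2) span_mono[of S "insert a S"] by (auto intro: span_diff span_base)
    finally have "c = 0"
      using yc(3) insert.prems(3) by blast
    then have "a \<in> span (insert a S - {a})"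
      using yc insert.hyps(2) by simp
    then show False
      using insert.prems(1) unfolding dependent_def by blast
  qed
  then show ?case
    using IH by (simp add: independent_insert)
qed

lemma complement_basis_disjoint:
  assumes "complement_basis scale A B S"
  shows "S \<inter> B = {}"
proof -
  have "S \<inter> B \<subseteq> {0}"
    using assms span_superset[of S] unfolding complement_basis_def by blast
  moreover have "0 \<notin> S"
    using assms dependent_zero unfolding complement_basis_def by blast
  ultimately show ?thesis
    by blast
qed

lemma complement_basis_independent_Un:
  assumes "subspace B" "complement_basis scale A B S" "C \<subseteq> B" "independent C"
  shows "independent (S \<union> C)"
proof (rule independent_UnI)
  show "span S \<inter> span C \<subseteq> {0}"
    using assms span_minimal[OF assms(3,1)] unfolding complement_basis_def by blast
qed (use assms in \<open>auto simp: complement_basis_def\<close>)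

lemma complement_basis_card_le:
  assumes "subspace B" "complement_basis scale A B S" "finite T" "A \<subseteq> span (B \<union> T)"
  shows "card S \<le> card T"
proof -
  obtain C where C: "C \<subseteq> B" "independent C" "B \<subseteq> span C"
    by (meson basis_exists)
  have S: "finite S" "S \<subseteq> A"
    using assms(2) unfolding complement_basis_def by auto
  have "B \<union> T \<subseteq> span (C \<union> T)"
    using C(3) span_mono[of C "C \<union> T"] span_superset[of "C \<union> T"] by blast
  then have "S \<subseteq> span (C \<union> T)"
    using S(2) assms(4) span_minimal[OF _ subspace_span] by blast
  then obtain X0 where X0: "finite X0" "X0 \<subseteq> C \<union> T" "S \<subseteq> span X0"
    by (rule finite_subset_span_cover[OF S(1)])
  define C0 where "C0 = X0 \<inter> C"
  have "finite C0"
    using X0(1) by (simp add: C0_def)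
  have "S \<union> C0 \<subseteq> span (C0 \<union> T)"
    using X0 span_mono[of X0 "C0 \<union> T"] span_superset[of "C0 \<union> T"] by (auto simp: C0_def)
  moreover have "independent (S \<union> C0)"
    by (rule complement_basis_independent_Un[OF assms(1,2)])
      (use C independent_mono[OF C(2)] in \<open>auto simp: C0_def\<close>)
  ultimately have "card (S \<union> C0) \<le> card (C0 \<union> T)"
    using independent_span_bound \<open>finite C0\<close> assms(3) by blast
  also have "\<dots> \<le> card C0 + card T"
    by (rule card_Un_le)
  moreover have "S \<inter> C0 = {}"
    using complement_basis_disjoint[OF assms(2)] C(1) by (auto simp: C0_def)
  ultimately show ?thesis
    using card_Un_disjoint[OF S(1) \<open>finite C0\<close>] by simp
qed

lemma quot_dim_eq_card:
  assumes "subspace B" "complement_basis scale A B S"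
  shows "quot_dim scale A B = enat (card S)"
proof -
  have S: "finite S" "S \<subseteq> A" "A \<subseteq> span (B \<union> S)"
    using assms(2) unfolding complement_basis_def by auto
  have "(LEAST n. \<exists>T. finite T \<and> T \<subseteq> A \<and> A \<subseteq> span (B \<union> T) \<and> card T = n) = card S"
    using S complement_basis_card_le[OF assms] by (intro Least_equality) auto
  then show ?thesis
    using S unfolding quot_dim_def by auto
qed

lemma subset_span_Int_Un:
  assumes "subspace A" "subspace B" "S \<subseteq> A" "A \<subseteq> span (B \<union> S)"
  shows "A \<subseteq> span ((A \<inter> B) \<union> S)"
proof
  fix a assume "a \<in> A"
  then obtain b y where decomp: "a = b + y" "b \<in> B" "y \<in> span S"
    using assms(4) span_eq_iff[THEN iffD2, OF assms(2)] unfolding span_Un by blast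
  have "y \<in> A"
    using decomp(3) span_minimal[OF assms(3,1)] by blast
  then have "b \<in> A \<inter> B"
    using decomp(1,2) \<open>a \<in> A\<close> subspace_diff[OF assms(1)] by (metis IntI add_diff_cancel_right')
  then have "b \<in> span ((A \<inter> B) \<union> S)" "y \<in> span ((A \<inter> B) \<union> S)"
    using decomp(3) span_mono[of S "(A \<inter> B) \<union> S"] by (auto intro: span_base)
  then show "a \<in> span ((A \<inter> B) \<union> S)"
    unfolding decomp(1) by (rule span_add)
qed

lemma finite_spanning_set_modulo_Int:
  assumes "subspace A" "subspace B" "finite T" "A \<subseteq> span (B \<union> T)"
  obtains S where "finite S" "S \<subseteq> A" "A \<subseteq> span ((A \<inter> B) \<union> S)"
proof -
  txt \<open>Lift a basis of the finite dimensional space K = span T \<inter> (A + B) into A.\<close>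
  define K where "K = {x \<in> span T. \<exists>a\<in>A. x - a \<in> B}"
  obtain P where P: "P \<subseteq> K" "independent P" "K \<subseteq> span P"
    by (meson basis_exists)
  have "P \<subseteq> span T"
    using P(1) by (auto simp: K_def)
  then have "finite P"
    using independent_span_bound[OF assms(3) P(2)] by blast
  have "\<forall>p\<in>P. \<exists>a. a \<in> A \<and> p - a \<in> B"
    using P(1) by (auto simp: K_def)
  then obtain lift where lift: "\<And>p. p \<in> P \<Longrightarrow> lift p \<in> A \<and> p - lift p \<in> B"
    by metis
  define S where "S = lift ` P"
  have "S \<subseteq> A" "finite S"
    using lift \<open>finite P\<close> by (auto simp: S_def)
  have "P \<subseteq> span (B \<union> S)"
  proof
    fix p assume "p \<in> P"
    then have "(p - lift p) + lift p \<in> span (B \<union> S)"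
      using lift by (intro span_add) (auto simp: S_def intro: span_base)
    then show "p \<in> span (B \<union> S)"
      by simp
  qed
  have "a \<in> span (B \<union> S)" if "a \<in> A" for a
  proof -
    obtain b x where bx: "a = b + x" "b \<in> B" "x \<in> span T"
      using \<open>a \<in> A\<close> assms(4) span_eq_iff[THEN iffD2, OF assms(2)] unfolding span_Un by blast
    have "x - a \<in> B"
      using bx subspace_neg[OF assms(2)] by simp
    then have "x \<in> span P"
      using bx(3) \<open>a \<in> A\<close> P(3) by (auto simp: K_def)
    then have "x \<in> span (B \<union> S)"
      using span_minimal[OF \<open>P \<subseteq> span (B \<union> S)\<close> subspace_span] by blast
    moreover have "b \<in> span (B \<union> S)"
      using bx(2) by (auto intro: span_base)
    ultimately show ?thesis
      unfolding bx(1) by (rule span_add[rotated])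
  qed
  then show ?thesis
    using that \<open>finite S\<close> \<open>S \<subseteq> A\<close> subset_span_Int_Un[OF assms(1,2) \<open>S \<subseteq> A\<close>] by blast
qed

lemma complement_basis_exists:
  assumes "subspace A" "subspace B" "finite T" "A \<subseteq> span (B \<union> T)"
  obtains S where "complement_basis scale A (A \<inter> B) S"
proof -
  obtain T' where T': "finite T'" "T' \<subseteq> A" "A \<subseteq> span ((A \<inter> B) \<union> T')"
    using finite_spanning_set_modulo_Int[OF assms] .
  obtain C where C: "C \<subseteq> A \<inter> B" "independent C" "A \<inter> B \<subseteq> span C"
    by (meson basis_exists)
  obtain D where D: "C \<subseteq> D" "D \<subseteq> C \<union> T'" "independent D" "C \<union> T' \<subseteq> span D"
    by (rule maximal_independent_subset_extend[OF Un_upper1 C(2)])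
  define S where "S = D - C"
  have "S \<subseteq> T'"
    using D(2) by (auto simp: S_def)
  have "(A \<inter> B) \<union> T' \<subseteq> span D"
    using C(3) D(4) span_mono[OF D(1)] by blast
  then have "A \<subseteq> span D"
    using T'(3) span_minimal[OF _ subspace_span] by blast
  also have "span D \<subseteq> span ((A \<inter> B) \<union> S)"
    using C(1) by (intro span_mono) (auto simp: S_def)
  finally have "A \<subseteq> span ((A \<inter> B) \<union> S)" .
  moreover have "span S \<inter> (A \<inter> B) \<subseteq> {0}"
  proof -
    have "independent (S \<union> C)"
      using D(1,3) by (simp add: S_def Un_absorb2)
    then have "span S \<inter> span C \<subseteq> {0}"
      using finite_subset[OF \<open>S \<subseteq> T'\<close> T'(1)]
      by (intro independent_Un_imp_span_Int) (auto simp: S_def)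
    then show ?thesis
      using C(3) by blast
  qed
  moreover have "independent S"
    using D(3) independent_mono by (auto simp: S_def)
  ultimately have "complement_basis scale A (A \<inter> B) S"
    using \<open>S \<subseteq> T'\<close> T'(1,2) finite_subset unfolding complement_basis_def by blast
  then show ?thesis
    by (rule that)
qed

lemma complement_basis_trans:
  assumes "subspace A" "B \<subseteq> A" "A \<subseteq> C"
    and "complement_basis scale A B S1" "complement_basis scale C A S2"
  shows "complement_basis scale C B (S1 \<union> S2)"
proof -
  have S1: "finite S1" "S1 \<subseteq> A" "A \<subseteq> span (B \<union> S1)" "independent S1" "span S1 \<inter> B \<subseteq> {0}"
    and S2: "finite S2" "S2 \<subseteq> C" "C \<subseteq> span (A \<union> S2)" "independent S2" "span S2 \<inter> A \<subseteq> {0}"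
    using assms(4,5) unfolding complement_basis_def by auto
  have span_S1: "span S1 \<subseteq> A"
    using S1(2) assms(1) by (rule span_minimal)
  have "A \<union> S2 \<subseteq> span (B \<union> (S1 \<union> S2))"
    using S1(3) span_mono[of "B \<union> S1" "B \<union> (S1 \<union> S2)"] span_superset[of "B \<union> (S1 \<union> S2)"]
    by blast
  then have "C \<subseteq> span (B \<union> (S1 \<union> S2))"
    using S2(3) span_minimal[OF _ subspace_span] by blast
  moreover have "independent (S1 \<union> S2)"
    using S1(1,4) S2(4,5) span_S1 by (intro independent_UnI) auto
  moreover have "span (S1 \<union> S2) \<inter> B \<subseteq> {0}"
  proof
    fix x assume x: "x \<in> span (S1 \<union> S2) \<inter> B"
    then obtain y1 y2 where y: "x = y1 + y2" "y1 \<in> span S1" "y2 \<in> span S2"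
      unfolding span_Un by blast
    have "y2 = x - y1"
      using y(1) by simp
    also have "\<dots> \<in> A"
      using x y(2) span_S1 assms(2) subspace_diff[OF assms(1)] by blast
    finally have "y2 = 0"
      using S2(5) y(3) by blast
    then have "y1 = 0"
      using S1(5) x y by auto
    with \<open>y2 = 0\<close> show "x \<in> {0}"
      using y(1) by simp
  qed
  ultimately show ?thesis
    using S1(1,2) S2(1,2) assms(3) unfolding complement_basis_def by blast
qed

lemma quot_dim_add:
  assumes "subspace A" "subspace B" "subspace C" "B \<subseteq> A" "A \<subseteq> C"
    and "finite T" "C \<subseteq> span (B \<union> T)"
  shows "quot_dim scale C B = quot_dim scale C A + quot_dim scale A B"
proof -
  have "C \<subseteq> span (A \<union> T)"
    using assms(4,7) span_mono[of "B \<union> T" "A \<union> T"] by blast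
  then obtain S2 where "complement_basis scale C (C \<inter> A) S2"
    by (rule complement_basis_exists[OF assms(3,1,6)])
  then have S2: "complement_basis scale C A S2"
    using assms(5) by (simp add: Int_absorb1 Int_absorb2)
  have "A \<subseteq> span (B \<union> T)"
    using assms(5,7) by blast
  then obtain S1 where "complement_basis scale A (A \<inter> B) S1"
    by (rule complement_basis_exists[OF assms(1,2,6)])
  then have S1: "complement_basis scale A B S1"
    using assms(4) by (simp add: Int_absorb1 Int_absorb2)
  have "S1 \<inter> S2 = {}"
    using complement_basis_disjoint[OF S2] S1 unfolding complement_basis_def by blast
  then have "card (S1 \<union> S2) = card S2 + card S1"
    using S1 S2 by (simp add: complement_basis_def card_Un_disjoint)
  then show ?thesis
    using quot_dim_eq_card[OF assms(2) complement_basis_trans[OF assms(1,4,5) S1 S2]]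
      quot_dim_eq_card[OF assms(1) S2] quot_dim_eq_card[OF assms(2) S1]
    by simp
qed

lemma complement_basis_span_Un:
  assumes "subspace A" "subspace B" "complement_basis scale A (A \<inter> B) S"
  shows "complement_basis scale (span (A \<union> B)) B S"
proof -
  have S: "finite S" "S \<subseteq> A" "A \<subseteq> span ((A \<inter> B) \<union> S)" "independent S"
      "span S \<inter> (A \<inter> B) \<subseteq> {0}"
    using assms(3) unfolding complement_basis_def by auto
  have "A \<union> B \<subseteq> span (B \<union> S)"
    using S(3) span_mono[of "(A \<inter> B) \<union> S" "B \<union> S"] span_superset[of "B \<union> S"] by blast
  then have "span (A \<union> B) \<subseteq> span (B \<union> S)"
    using span_minimal by blast
  moreover have "span S \<subseteq> A"
    using S(2) assms(1) by (rule span_minimal)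
  ultimately show ?thesis
    using S span_superset[of "A \<union> B"] unfolding complement_basis_def by blast
qed

lemma quot_dim_span_Un:
  assumes "subspace F" "subspace G" "finite T" "F \<subseteq> span (G \<union> T)"
  shows "quot_dim scale (span (F \<union> G)) G = quot_dim scale F (F \<inter> G)"
proof -
  obtain S where S: "complement_basis scale F (F \<inter> G) S"
    using complement_basis_exists[OF assms] .
  show ?thesis
    using quot_dim_eq_card[OF assms(2) complement_basis_span_Un[OF assms(1,2) S]]
      quot_dim_eq_card[OF subspace_inter[OF assms(1,2)] S]
    by simp
qed

lemma dim_span_eq_dim_plus_quot_dim:
  assumes "finite Ub" "subspace B" "B \<subseteq> span Ub"
  shows "enat (dim (span Ub)) = enat (dim B) + quot_dim scale (span Ub) B"
proof -
  have "span Ub \<subseteq> span (B \<union> Ub)"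
    by (rule span_mono) blast
  then obtain S where "complement_basis scale (span Ub) (span Ub \<inter> B) S"
    by (rule complement_basis_exists[OF subspace_span assms(2,1)])
  then have S: "complement_basis scale (span Ub) B S"
    using assms(3) by (simp add: Int_absorb1 Int_absorb2)
  obtain C where C: "C \<subseteq> B" "independent C" "B \<subseteq> span C" "card C = dim B"
    by (rule basis_exists)
  have C_Ub: "C \<subseteq> span Ub"
    using C(1) assms(3) by (rule order_trans)
  then have "finite C"
    using independent_span_bound[OF assms(1) C(2)] by blast
  have S_props: "S \<subseteq> span Ub" "span Ub \<subseteq> span (B \<union> S)"
    using S by (simp_all add: complement_basis_def)
  have "B \<union> S \<subseteq> span (S \<union> C)"
    using C(3) span_mono[of C "S \<union> C"] span_superset[of "S \<union> C"] by blast
  then have "span (B \<union> S) \<subseteq> span (S \<union> C)"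
    by (rule span_minimal[OF _ subspace_span])
  then have "span Ub \<subseteq> span (S \<union> C)"
    using S_props(2) by (rule order_trans[rotated])
  moreover have "S \<union> C \<subseteq> span Ub"
    using S_props(1) C_Ub by (rule Un_least)
  ultimately have "card (S \<union> C) = dim (span Ub)"
    by (intro basis_card_eq_dim complement_basis_independent_Un[OF assms(2) S C(1,2)])
  moreover have "card (S \<union> C) = card S + card C"
    using complement_basis_disjoint[OF S] C(1) S \<open>finite C\<close>
    by (intro card_Un_disjoint) (auto simp: complement_basis_def)
  ultimately show ?thesis
    using quot_dim_eq_card[OF assms(2) S] C(4) by simp
qed

lemma dim_eq_dim_Int_plus_quot_dims:
  assumes "subspace F" "subspace G" "finite Ub" "F \<subseteq> span (G \<union> Ub)"
  shows "enat (dim (span Ub)) = enat (dim (G \<inter> span Ub)) +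
    quot_dim scale (span (G \<union> Ub)) (span (F \<union> G)) + quot_dim scale F (F \<inter> G)"
proof -
  let ?U = "span Ub" and ?X = "span (G \<union> Ub)" and ?FG = "span (F \<union> G)"
  have "G \<subseteq> ?FG"
    using span_superset by blast
  moreover have "?FG \<subseteq> ?X"
    using assms(4) span_superset[of "G \<union> Ub"] by (intro span_minimal) auto
  ultimately have "quot_dim scale ?X G = quot_dim scale ?X ?FG + quot_dim scale ?FG G"
    by (intro quot_dim_add[OF subspace_span assms(2) subspace_span _ _ assms(3)]) auto
  also have "quot_dim scale ?FG G = quot_dim scale F (F \<inter> G)"
    by (rule quot_dim_span_Un[OF assms])
  finally have X_G: "quot_dim scale ?X G = quot_dim scale ?X ?FG + quot_dim scale F (F \<inter> G)" .
  have "?U \<subseteq> ?X"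
    by (rule span_mono) blast
  then have "quot_dim scale (span (?U \<union> G)) G = quot_dim scale ?U (?U \<inter> G)"
    by (rule quot_dim_span_Un[OF subspace_span assms(2,3)])
  moreover have "span (?U \<union> G) = ?X"
    using span_Un_span[of G Ub] by (simp add: Un_commute)
  ultimately have "quot_dim scale ?X G = quot_dim scale ?U (G \<inter> ?U)"
    by (simp add: Int_commute)
  moreover have "enat (dim ?U) = enat (dim (G \<inter> ?U)) + quot_dim scale ?U (G \<inter> ?U)"
    by (rule dim_span_eq_dim_plus_quot_dim[OF assms(3) subspace_inter[OF assms(2) subspace_span]])
      blast
  ultimately show ?thesis
    using X_G by (simp add: add.assoc)
qed

lemma dim_Int_eq_iff_quot_dim_eq:
  assumes "subspace F" "subspace G" "fin_dim scale U" "F \<subseteq> sumset G U" "G \<subseteq> sumset F U"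
  shows "dim (F \<inter> U) = dim (G \<inter> U) \<longleftrightarrow> quot_dim scale F (F \<inter> G) = quot_dim scale G (F \<inter> G)"
proof -
  obtain Ub where Ub: "finite Ub" "U = span Ub"
    using assms(3) unfolding fin_dim_def by blast
  have "sumset G U = span (G \<union> Ub)" "sumset F U = span (F \<union> Ub)"
    using sumset_eq_span_Un[OF assms(1)] sumset_eq_span_Un[OF assms(2)] span_Un_span Ub(2)
    by auto
  then have F_G: "F \<subseteq> span (G \<union> Ub)" and G_F: "G \<subseteq> span (F \<union> Ub)"
    using assms(4,5) by auto
  then have "span (G \<union> Ub) = span (F \<union> Ub)"
    using span_superset[of "F \<union> Ub"] span_superset[of "G \<union> Ub"] unfolding span_eq by blast
  define r where "r = quot_dim scale (span (G \<union> Ub)) (span (F \<union> G))"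
  have "enat (dim U) = enat (dim (G \<inter> U)) + r + quot_dim scale F (F \<inter> G)"
    using dim_eq_dim_Int_plus_quot_dims[OF assms(1,2) Ub(1) F_G] Ub(2) by (simp add: r_def)
  moreover have "enat (dim U) = enat (dim (F \<inter> U)) + r + quot_dim scale G (F \<inter> G)"
    using dim_eq_dim_Int_plus_quot_dims[OF assms(2,1) Ub(1) G_F] Ub(2)
      \<open>span (G \<union> Ub) = span (F \<union> Ub)\<close>
    by (simp add: r_def Un_commute Int_commute)
  ultimately show ?thesis
    by (cases r; cases "quot_dim scale F (F \<inter> G)"; cases "quot_dim scale G (F \<inter> G)") auto
qed

lemma sumset_subspace_self: "subspace U \<Longrightarrow> sumset U U = U"
  by (simp add: sumset_eq_span_Un span_eq_iff[THEN iffD2])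

lemma fin_dim_sumset:
  assumes "fin_dim scale U" "fin_dim scale W"
  shows "fin_dim scale (sumset U W)"
proof -
  obtain SU SW where "finite SU" "U = span SU" "finite SW" "W = span SW"
    using assms unfolding fin_dim_def by blast
  moreover have "sumset (span SU) (span SW) = span (SU \<union> SW)"
    by (simp add: sumset_def span_Un)
  ultimately show ?thesis
    unfolding fin_dim_def by blast
qed

lemma fin_dim_subspace: "fin_dim scale U \<Longrightarrow> subspace U"
  unfolding fin_dim_def by auto

lemma commensurable_via_iff:
  assumes "subspace F" "subspace G" "fin_dim scale U"
  shows "commensurable_via scale U F G \<longleftrightarrow> commensurable_via' scale U F G"
  using dim_Int_eq_iff_quot_dim_eq[OF assms]
  unfolding commensurable_via_def commensurable_via'_def by blast

lemma commensurable_via_mono: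
  assumes "subspace F" "subspace G" "fin_dim scale U" "fin_dim scale U'" "U \<subseteq> U'"
    and "commensurable_via scale U F G"
  shows "commensurable_via scale U' F G"
proof -
  have "commensurable_via' scale U F G"
    using assms(6) commensurable_via_iff[OF assms(1-3)] by blast
  then have "commensurable_via' scale U' F G"
    using sumset_mono[OF assms(5)] unfolding commensurable_via'_def by blast
  then show ?thesis
    using commensurable_via_iff[OF assms(1,2,4)] by blast
qed

lemma commensurable_via_trans:
  assumes "subspace U" "commensurable_via scale U F G" "commensurable_via scale U G H"
  shows "commensurable_via scale U F H"
proof -
  have incl: "F \<subseteq> sumset G U" "G \<subseteq> sumset H U" "H \<subseteq> sumset G U" "G \<subseteq> sumset F U"
    using assms(2,3) unfolding commensurable_via_def by auto
  have "F \<subseteq> sumset H (sumset U U)"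
    using incl(1,2) by (rule subset_sumset_trans)
  moreover have "H \<subseteq> sumset F (sumset U U)"
    using incl(3,4) by (rule subset_sumset_trans)
  ultimately show ?thesis
    using assms(2,3) sumset_subspace_self[OF assms(1)] unfolding commensurable_via_def by simp
qed

lemma gen_flag_subspace: "gen_flag scale FF \<Longrightarrow> F \<in> FF \<Longrightarrow> subspace F"
  unfolding gen_flag_def is_chain_def by blast

lemma gen_flag_chain: "gen_flag scale FF \<Longrightarrow> \<forall>F1\<in>FF. \<forall>F2\<in>FF. F1 \<subseteq> F2 \<or> F2 \<subseteq> F1"
  unfolding gen_flag_def is_chain_def by blast

lemma commensurable_refl:
  assumes "weakly_compatible scale FF E"
  shows "commensurable scale E FF FF"
proof -
  have "fin_dim scale {0}"
    unfolding fin_dim_def by (auto intro: exI[of _ "{}"])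
  moreover have "commensurable_via scale {0} F F" for F
    unfolding commensurable_via_def by (simp add: subset_sumset)
  ultimately show ?thesis
    using assms unfolding commensurable_iff_via
    by (intro conjI exI[of _ id] exI[of _ "{0}"]) (auto simp: monotone_on_def)
qed

lemma commensurable_sym:
  assumes "commensurable scale E FF GG"
  shows "commensurable scale E GG FF"
proof -
  obtain \<phi> U where wc: "weakly_compatible scale FF E" "weakly_compatible scale GG E"
    and \<phi>: "bij_betw \<phi> FF GG" "mono_on FF \<phi>" "subspace U" "fin_dim scale U"
      "\<forall>F\<in>FF. commensurable_via scale U F (\<phi> F)"
    using assms unfolding commensurable_iff_via by blast
  let ?\<psi> = "inv_into FF \<phi>"
  have \<psi>: "bij_betw ?\<psi> GG FF"
    by (rule bij_betw_inv_into[OF \<phi>(1)])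
  moreover have "mono_on GG ?\<psi>"
    using wc(1) gen_flag_chain unfolding weakly_compatible_def
    by (intro mono_on_inv_into_chain[OF \<phi>(1,2)]) auto
  moreover have "commensurable_via scale U G (?\<psi> G)" if "G \<in> GG" for G
  proof -
    have "commensurable_via scale U (?\<psi> G) (\<phi> (?\<psi> G))"
      using \<phi>(5) bij_betw_apply[OF \<psi> that] by blast
    then show ?thesis
      using bij_betw_inv_into_right[OF \<phi>(1) that] by (simp add: commensurable_via_sym)
  qed
  ultimately show ?thesis
    using wc \<phi>(3,4) unfolding commensurable_iff_via by blast
qed

lemma commensurable_trans:
  assumes "commensurable scale E FF GG" "commensurable scale E GG HH"
  shows "commensurable scale E FF HH"
proof -
  obtain \<phi> U where wc: "weakly_compatible scale FF E" "weakly_compatible scale GG E"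
    and \<phi>: "bij_betw \<phi> FF GG" "mono_on FF \<phi>" "fin_dim scale U"
      "\<forall>F\<in>FF. commensurable_via scale U F (\<phi> F)"
    using assms(1) unfolding commensurable_iff_via by blast
  obtain \<psi> W where wc': "weakly_compatible scale HH E"
    and \<psi>: "bij_betw \<psi> GG HH" "mono_on GG \<psi>" "fin_dim scale W"
      "\<forall>G\<in>GG. commensurable_via scale W G (\<psi> G)"
    using assms(2) unfolding commensurable_iff_via by blast
  let ?U = "sumset U W"
  have U: "fin_dim scale ?U" "U \<subseteq> ?U" "W \<subseteq> ?U"
    using fin_dim_sumset[OF \<phi>(3) \<psi>(3)] subset_sumset[of W U] subset_sumset[of U W]
      subspace_0[OF fin_dim_subspace[OF \<phi>(3)]] subspace_0[OF fin_dim_subspace[OF \<psi>(3)]]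
    unfolding sumset_commute[of U W] by auto
  have "commensurable_via scale ?U F ((\<psi> \<circ> \<phi>) F)" if "F \<in> FF" for F
  proof -
    have "\<phi> F \<in> GG" "\<psi> (\<phi> F) \<in> HH"
      using that \<phi>(1) \<psi>(1) by (auto intro: bij_betw_apply)
    then have "subspace F" "subspace (\<phi> F)" "subspace (\<psi> (\<phi> F))"
      using that wc wc' gen_flag_subspace unfolding weakly_compatible_def by blast+
    have "commensurable_via scale ?U F (\<phi> F)"
      using \<phi>(4) that
      by (intro commensurable_via_mono[OF \<open>subspace F\<close> \<open>subspace (\<phi> F)\<close> \<phi>(3) U(1,2)]) blast
    moreover have "commensurable_via scale ?U (\<phi> F) (\<psi> (\<phi> F))"
      using \<psi>(4) \<open>\<phi> F \<in> GG\<close>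
      by (intro commensurable_via_mono[OF \<open>subspace (\<phi> F)\<close> \<open>subspace (\<psi> (\<phi> F))\<close> \<psi>(3) U(1,3)])
        blast
    ultimately show ?thesis
      unfolding comp_apply by (rule commensurable_via_trans[OF fin_dim_subspace[OF U(1)]])
  qed
  moreover have "bij_betw (\<psi> \<circ> \<phi>) FF HH"
    by (rule bij_betw_trans[OF \<phi>(1) \<psi>(1)])
  moreover have "mono_on FF (\<psi> \<circ> \<phi>)"
    by (rule monotone_on_o[OF \<psi>(2) \<phi>(2)]) (use \<phi>(1) in \<open>simp add: bij_betw_def\<close>)
  ultimately show ?thesis
    unfolding commensurable_iff_via using wc(1) wc' U(1) fin_dim_subspace[OF U(1)] by blast
qed

lemma commensurable_iff_commensurable':
  assumes "gen_flag scale FF" "gen_flag scale GG"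
  shows "commensurable scale E FF GG \<longleftrightarrow> commensurable' scale E FF GG"
proof -
  have "(\<forall>F\<in>FF. commensurable_via scale U F (\<phi> F)) \<longleftrightarrow> (\<forall>F\<in>FF. commensurable_via' scale U F (\<phi> F))"
    if "bij_betw \<phi> FF GG" "fin_dim scale U" for \<phi> U
    using commensurable_via_iff[OF gen_flag_subspace[OF assms(1)]
        gen_flag_subspace[OF assms(2) bij_betw_apply[OF that(1)]] that(2)]
    by blast
  then show ?thesis
    unfolding commensurable_iff_via commensurable'_iff_via' by blast
qed

end

theorem mainTheorem6:
  fixes scale :: "'k::field_char_0 \<Rightarrow> 'v::ab_group_add \<Rightarrow> 'v"
    and E :: "'v set"
  assumes "vector_space scale"
    and "is_basis scale E"
    and "countable E"
  shows "equiv {\<F>. gen_flag scale \<F> \<and> weakly_compatible scale \<F> E}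
               {(\<F>, \<G>). commensurable scale E \<F> \<G>} \<and>
         (\<forall>\<F> \<G>. gen_flag scale \<F> \<longrightarrow> gen_flag scale \<G> \<longrightarrow>
           (commensurable scale E \<F> \<G> \<longleftrightarrow> commensurable' scale E \<F> \<G>))"
proof -
  interpret vector_space scale
    by (rule assms(1))
  let ?A = "{\<F>. gen_flag scale \<F> \<and> weakly_compatible scale \<F> E}"
  let ?R = "{(\<F>, \<G>). commensurable scale E \<F> \<G>}"
  have "equiv ?A ?R"
  proof (rule equivI)
    show "?R \<subseteq> ?A \<times> ?A"
      unfolding commensurable_iff_via weakly_compatible_def by blast
    show "refl_on ?A ?R"
      by (rule refl_onI) (simp add: commensurable_refl)
    show "sym ?R"
      by (rule symI) (simp add: commensurable_sym)
    show "trans ?R"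
      by (rule transI) (use commensurable_trans in blast)
  qed
  then show ?thesis
    using commensurable_iff_commensurable' by blast
qed

end
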